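(* Let $H$ be a finite connected graph (loops allowed) with at least two nodes, such that there is no pair of distinct nodes $i\neq j$ with $N(i)\subseteq N(j)$. Let $G=H\times H$ be its weak square. Then the projection $\pi_1:G\to H$, $\pi_1(i_1,i_2)=i_1$, is an isolated vertex of the graph $\hom(G,H)$; in particular $\hom(G,H)$ is disconnected.
   Context: $N(i)$ denotes the set of nodes adjacent to $i$ in $H$ (containing $i$ iff $i$ is looped). The weak square $H\times H$ has node set all ordered pairs $(i_1,i_2)$ of nodes of $H$, with $(i_1,i_2)\sim(j_1,j_2)$ iff $i_1\sim j_1$ and $i_2\sim j_2$ in $H$ (so it may have loops). $\hom(G,H)$ is the set of graph homomorphisms $G\to H$, made into a graph by declaring two homomorphisms adjacent iff they differ at exactly one node of $G$. *)

theory Defs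
  imports Main "HOL-Library.FuncSet"
begin

definition graph :: "'a set \<Rightarrow> ('a \<Rightarrow> 'a \<Rightarrow> bool) \<Rightarrow> bool" where
  "graph V E \<longleftrightarrow> (\<forall>u v. E u v \<longrightarrow> u \<in> V \<and> v \<in> V) \<and> (\<forall>u v. E u v \<longrightarrow> E v u)"

definition connected_graph :: "'a set \<Rightarrow> ('a \<Rightarrow> 'a \<Rightarrow> bool) \<Rightarrow> bool" where
  "connected_graph V E \<longleftrightarrow> V \<noteq> {} \<and>
     (\<forall>u\<in>V. \<forall>v\<in>V. (u, v) \<in> {(x, y). x \<in> V \<and> y \<in> V \<and> E x y}\<^sup>*)"

definition nbhd :: "'a set \<Rightarrow> ('a \<Rightarrow> 'a \<Rightarrow> bool) \<Rightarrow> 'a \<Rightarrow> 'a set" where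
  "nbhd V E i = {j \<in> V. E i j}"

definition weak_square_edges :: "('a \<Rightarrow> 'a \<Rightarrow> bool) \<Rightarrow> ('a \<times> 'a) \<Rightarrow> ('a \<times> 'a) \<Rightarrow> bool" where
  "weak_square_edges E p q \<longleftrightarrow> E (fst p) (fst q) \<and> E (snd p) (snd q)"

definition homs :: "'a set \<Rightarrow> ('a \<Rightarrow> 'a \<Rightarrow> bool) \<Rightarrow> 'b set \<Rightarrow> ('b \<Rightarrow> 'b \<Rightarrow> bool)
    \<Rightarrow> ('a \<Rightarrow> 'b) set" where
  "homs VG EG VH EH = {f \<in> VG \<rightarrow>\<^sub>E VH. \<forall>u\<in>VG. \<forall>v\<in>VG. EG u v \<longrightarrow> EH (f u) (f v)}"

definition hom_adj :: "'a set \<Rightarrow> ('a \<Rightarrow> 'b) \<Rightarrow> ('a \<Rightarrow> 'b) \<Rightarrow> bool" where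
  "hom_adj VG f g \<longleftrightarrow> card {x \<in> VG. f x \<noteq> g x} = 1"

end

theory Submission
  imports Defs
begin

text \<open>Suppose a homomorphism g from the weak square to H differs from the projection
  \<open>\<pi>\<^sub>1\<close> only at (a, b), and put c = g (a, b) \<noteq> a. Choose a neighbour y \<noteq> b of b (it exists
  because H is connected with at least two nodes). For every neighbour x of a the pair
  (x, y) is adjacent to (a, b) and differs from it, so g maps it to x, and x is adjacent to c.
  Thus N(a) \<subseteq> N(c), which the hypothesis on neighbourhoods forbids. Hence \<open>\<pi>\<^sub>1\<close> is isolated
  in hom(G, H), which also contains \<open>\<pi>\<^sub>2 \<noteq> \<pi>\<^sub>1\<close>, so hom(G, H) is disconnected.\<close>

lemma rtrancl_leaves_start:
  assumes "(x, y) \<in> R\<^sup>*" and "y \<noteq> x"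
  shows "\<exists>z. z \<noteq> x \<and> (x, z) \<in> R"
  using assms
proof (induction rule: rtrancl_induct)
  case (step y z)
  then show ?case by (cases "y = x") auto
qed simp

lemma connected_graph_ex_other_neighbour:
  assumes "connected_graph V E" and "x \<in> V" and "y \<in> V" and "y \<noteq> x"
  shows "\<exists>z\<in>V. z \<noteq> x \<and> E x z"
proof -
  have "(x, y) \<in> {(u, v). u \<in> V \<and> v \<in> V \<and> E u v}\<^sup>*"
    using assms(1-3) unfolding connected_graph_def by blast
  from rtrancl_leaves_start[OF this \<open>y \<noteq> x\<close>] show ?thesis by blast
qed

lemma hom_adjE:
  assumes "hom_adj VG f g"
  obtains z where "z \<in> VG" and "f z \<noteq> g z" and "\<And>x. x \<in> VG \<Longrightarrow> x \<noteq> z \<Longrightarrow> f x = g x"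
proof -
  from assms obtain z where "{x \<in> VG. f x \<noteq> g x} = {z}"
    unfolding hom_adj_def by (rule card_1_singletonE)
  then show thesis using that by blast
qed

lemma restrict_fst_in_homs_weak_square:
  "restrict fst (V \<times> V) \<in> homs (V \<times> V) (weak_square_edges E) V E"
  unfolding homs_def weak_square_edges_def by auto

lemma restrict_snd_in_homs_weak_square:
  "restrict snd (V \<times> V) \<in> homs (V \<times> V) (weak_square_edges E) V E"
  unfolding homs_def weak_square_edges_def by auto

lemma weak_square_hom_nbhd_subset:
  assumes g: "g \<in> homs (V \<times> V) (weak_square_edges E) V E"
    and agree: "\<And>p. p \<in> V \<times> V \<Longrightarrow> p \<noteq> (a, b) \<Longrightarrow> g p = fst p"
    and "a \<in> V" and "b \<in> V" and "y \<in> V" and "y \<noteq> b" and "E b y"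
  shows "nbhd V E a \<subseteq> nbhd V E (g (a, b))"
proof
  fix x
  assume "x \<in> nbhd V E a"
  then have "x \<in> V" and "E a x" unfolding nbhd_def by auto
  with g \<open>a \<in> V\<close> \<open>b \<in> V\<close> \<open>y \<in> V\<close> \<open>E b y\<close> have "E (g (a, b)) (g (x, y))"
    unfolding homs_def weak_square_edges_def by auto
  moreover have "g (x, y) = x" using agree \<open>x \<in> V\<close> \<open>y \<in> V\<close> \<open>y \<noteq> b\<close> by auto
  ultimately show "x \<in> nbhd V E (g (a, b))" using \<open>x \<in> V\<close> unfolding nbhd_def by simp
qed

lemma restrict_fst_isolated_in_hom_graph:
  assumes nbr: "\<And>b. b \<in> V \<Longrightarrow> \<exists>y\<in>V. y \<noteq> b \<and> E b y"
    and incomparable: "\<forall>i\<in>V. \<forall>j\<in>V. i \<noteq> j \<longrightarrow> \<not> nbhd V E i \<subseteq> nbhd V E j"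
    and g: "g \<in> homs (V \<times> V) (weak_square_edges E) V E"
  shows "\<not> hom_adj (V \<times> V) (restrict fst (V \<times> V)) g"
proof
  assume "hom_adj (V \<times> V) (restrict fst (V \<times> V)) g"
  then obtain a b where ab: "(a, b) \<in> V \<times> V" and moved: "a \<noteq> g (a, b)"
    and agree: "\<And>p. p \<in> V \<times> V \<Longrightarrow> p \<noteq> (a, b) \<Longrightarrow> g p = fst p"
    by (elim hom_adjE) (metis prod.collapse restrict_apply')
  from ab nbr obtain y where "y \<in> V" "y \<noteq> b" "E b y" by blast
  with g agree ab have "nbhd V E a \<subseteq> nbhd V E (g (a, b))"
    by (intro weak_square_hom_nbhd_subset) auto
  moreover have "g (a, b) \<in> V" using g ab unfolding homs_def by auto
  ultimately show False using incomparable moved ab by blast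
qed

theorem mainTheorem9:
  fixes V :: "'a set" and E :: "'a \<Rightarrow> 'a \<Rightarrow> bool"
  assumes "graph V E"
    and "finite V"
    and "connected_graph V E"
    and "card V \<ge> 2"
    and "\<forall>i\<in>V. \<forall>j\<in>V. i \<noteq> j \<longrightarrow> \<not> (nbhd V E i \<subseteq> nbhd V E j)"
  shows "restrict fst (V \<times> V) \<in> homs (V \<times> V) (weak_square_edges E) V E
     \<and> (\<forall>g\<in>homs (V \<times> V) (weak_square_edges E) V E.
           \<not> hom_adj (V \<times> V) (restrict fst (V \<times> V)) g)
     \<and> \<not> connected_graph (homs (V \<times> V) (weak_square_edges E) V E) (hom_adj (V \<times> V))"
proof -
  let ?H = "homs (V \<times> V) (weak_square_edges E) V E"
  let ?\<pi>\<^sub>1 = "restrict fst (V \<times> V)" and ?\<pi>\<^sub>2 = "restrict snd (V \<times> V)"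
  obtain a b where ab: "a \<in> V" "b \<in> V" "a \<noteq> b"
    using assms(2,4) card_le_Suc0_iff_eq[of V] by force
  have nbr: "\<exists>y\<in>V. y \<noteq> x \<and> E x y" if "x \<in> V" for x
    using ab that connected_graph_ex_other_neighbour[OF assms(3)] by metis
  have isolated: "\<forall>g\<in>?H. \<not> hom_adj (V \<times> V) ?\<pi>\<^sub>1 g"
    using restrict_fst_isolated_in_hom_graph[OF nbr assms(5)] by blast
  have "?\<pi>\<^sub>2 \<noteq> ?\<pi>\<^sub>1"
    using ab by (metis SigmaI fst_conv restrict_apply' snd_conv)
  then have "\<not> connected_graph ?H (hom_adj (V \<times> V))"
    using isolated connected_graph_ex_other_neighbour[of ?H _ ?\<pi>\<^sub>1 ?\<pi>\<^sub>2]
      restrict_fst_in_homs_weak_square restrict_snd_in_homs_weak_square by blast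
  with isolated show ?thesis using restrict_fst_in_homs_weak_square by blast
qed

end
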